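(* Let $L\in\mathbb{R}^{n\times m}$ be arbitrary, let $F_d\in\mathbb{R}^{p\times n}$ be a deadbeat gain (all eigenvalues of $A_{F_d}=A+BF_d$ equal zero), let $s\ge1$, $k$ be integers, and let $(u,y,r,\hat x)$ be a solution of the kernel-based model with gain $L$ on the time interval $[k-n+1,k+s]$. Then for every $F\in\mathbb{R}^{p\times n}$ there exists $v\in\mathbb{R}^{(s+n)p}$ such that $$\begin{bmatrix}u_s(k)\\ y_s(k)\end{bmatrix}=I_{G,s}(F)\,v+I_{C,s}(F_d,L)\,r_{s+n}(k-n).$$
   Context: Consider the discrete-time LTI system $x(k+1)=Ax(k)+Bu(k)$, $y(k)=Cx(k)+Du(k)$ with $u\in\mathbb{R}^p$, $x\in\mathbb{R}^n$, $y\in\mathbb{R}^m$, $n\ge 1$, and $(A,B,C,D)$ a minimal (controllable and observable) realization. For a sequence $\phi$ and integers $k$, $s\ge1$, the stacked vector is $\phi_s(k)=[\phi(k+1)^T,\dots,\phi(k+s)^T]^T$. For $F\in\mathbb{R}^{p\times n}$ put $A_F=A+BF$ and $C_F=C+DF$. Kernel-based model with observer gain $L\in\mathbb{R}^{n\times m}$: sequences $u,y,r\ (\in\mathbb{R}^m),\hat x$ satisfying $\hat x(k+1)=A\hat x(k)+Bu(k)+Lr(k)$, $y(k)=C\hat x(k)+Du(k)+r(k)$ ($r$ is the residual). Finite-sample image representation: $M_s(F)\in\mathbb{R}^{sp\times(s+n)p}$, $N_s(F)\in\mathbb{R}^{sm\times(s+n)p}$ with $(l,j)$ blocks ($l=1,\dots,s$;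 $j=1,\dots,s+n$) $M_{n+l-j}$, $N_{n+l-j}$, where $M_k=FA_F^{k-1}B$ ($k\ge1$), $M_0=I_p$, $M_k=0$ ($k<0$), $N_k=C_FA_F^{k-1}B$ ($k\ge1$), $N_0=D$, $N_k=0$ ($k<0$); $I_{G,s}(F)=\begin{bmatrix}M_s(F)\\ N_s(F)\end{bmatrix}$. For gains $F,L$: $\hat Y_s(F,L)\in\mathbb{R}^{sp\times(s+n)m}$, $\hat X_s(F,L)\in\mathbb{R}^{sm\times(s+n)m}$ with $(l,j)$ blocks $\hat Y_{n+l-j}$, $\hat X_{n+l-j}$, where $\hat Y_k=FA_F^{k-1}L$ ($k\ge1$), $\hat Y_k=0$ ($k\le0$), $\hat X_k=C_FA_F^{k-1}L$ ($k\ge1$), $\hat X_0=I_m$, $\hat X_k=0$ ($k<0$); $I_{C,s}(F,L)=\begin{bmatrix}\hat Y_s(F,L)\\ \hat X_s(F,L)\end{bmatrix}$. *)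

theory Defs
  imports "HOL-Analysis.Analysis"
begin

primrec matpow :: "real^'n^'n \<Rightarrow> nat \<Rightarrow> real^'n^'n" where
  "matpow M 0 = mat 1"
| "matpow M (Suc k) = M ** matpow M k"

definition controllable :: "real^'n^'n \<Rightarrow> real^'p^'n \<Rightarrow> bool" where
  "controllable A B \<longleftrightarrow>
     span (\<Union>k<CARD('n). range (\<lambda>w. matpow A k *v (B *v w))) = UNIV"

definition observable :: "real^'n^'n \<Rightarrow> real^'n^'m \<Rightarrow> bool" where
  "observable A C \<longleftrightarrow>
     (\<forall>x. (\<forall>k<CARD('n). C *v (matpow A k *v x) = 0) \<longrightarrow> x = 0)"

definition minimal_realization ::
  "real^'n^'n \<Rightarrow> real^'p^'n \<Rightarrow> real^'n^'m \<Rightarrow> real^'p^'m \<Rightarrow> bool" where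
  "minimal_realization A B C D \<longleftrightarrow> controllable A B \<and> observable A C"

definition cmat :: "real^'n^'n \<Rightarrow> complex^'n^'n" where
  "cmat M = (\<chi> i j. complex_of_real (M $ i $ j))"

definition is_eigenvalue :: "real^'n^'n \<Rightarrow> complex \<Rightarrow> bool" where
  "is_eigenvalue M c \<longleftrightarrow> (\<exists>x::complex^'n. x \<noteq> 0 \<and> cmat M *v x = c *s x)"

definition deadbeat :: "real^'n^'n \<Rightarrow> real^'p^'n \<Rightarrow> real^'n^'p \<Rightarrow> bool" where
  "deadbeat A B F \<longleftrightarrow> (\<forall>c. is_eigenvalue (A + B ** F) c \<longrightarrow> c = 0)"

definition kernel_model_on ::
  "real^'n^'n \<Rightarrow> real^'p^'n \<Rightarrow> real^'n^'m \<Rightarrow> real^'p^'m \<Rightarrow> real^'m^'n \<Rightarrow>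
   (int \<Rightarrow> real^'p) \<Rightarrow> (int \<Rightarrow> real^'m) \<Rightarrow> (int \<Rightarrow> real^'m) \<Rightarrow> (int \<Rightarrow> real^'n) \<Rightarrow>
   int \<Rightarrow> int \<Rightarrow> bool" where
  "kernel_model_on A B C D L u y r xh t0 t1 \<longleftrightarrow>
     (\<forall>t. t0 \<le> t \<and> t \<le> t1 \<longrightarrow>
        xh (t + 1) = A *v xh t + B *v u t + L *v r t \<and>
        y t = C *v xh t + D *v u t + r t)"

text \<open>Markov-parameter blocks. A_F = A + B F, C_F = C + D F.\<close>
definition Mblk :: "real^'n^'n \<Rightarrow> real^'p^'n \<Rightarrow> real^'n^'p \<Rightarrow> int \<Rightarrow> real^'p^'p" where
  "Mblk A B F k = (if k \<ge> 1 then F ** matpow (A + B ** F) (nat (k - 1)) ** B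
                   else if k = 0 then mat 1 else 0)"

definition Nblk :: "real^'n^'n \<Rightarrow> real^'p^'n \<Rightarrow> real^'n^'m \<Rightarrow> real^'p^'m \<Rightarrow> real^'n^'p
                    \<Rightarrow> int \<Rightarrow> real^'p^'m" where
  "Nblk A B C D F k = (if k \<ge> 1 then (C + D ** F) ** matpow (A + B ** F) (nat (k - 1)) ** B
                       else if k = 0 then D else 0)"

definition Yhat_blk :: "real^'n^'n \<Rightarrow> real^'p^'n \<Rightarrow> real^'n^'p \<Rightarrow> real^'m^'n
                        \<Rightarrow> int \<Rightarrow> real^'m^'p" where
  "Yhat_blk A B F L k = (if k \<ge> 1 then F ** matpow (A + B ** F) (nat (k - 1)) ** L else 0)"

definition Xhat_blk :: "real^'n^'n \<Rightarrow> real^'p^'n \<Rightarrow> real^'n^'m \<Rightarrow> real^'p^'m \<Rightarrow> real^'n^'p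
                        \<Rightarrow> real^'m^'n \<Rightarrow> int \<Rightarrow> real^'m^'m" where
  "Xhat_blk A B C D F L k = (if k \<ge> 1 then (C + D ** F) ** matpow (A + B ** F) (nat (k - 1)) ** L
                             else if k = 0 then mat 1 else 0)"

text \<open>Block vectors are represented as functions from block index (1-based) to blocks.
  Product of the s x (s+n) block matrix with (l,j) block T(n+l-j) and a block vector w;
  the result is the block vector indexed by l = 1..s.\<close>
definition block_toeplitz_mult ::
  "nat \<Rightarrow> nat \<Rightarrow> (int \<Rightarrow> real^'a^'b) \<Rightarrow> (nat \<Rightarrow> real^'a) \<Rightarrow> nat \<Rightarrow> real^'b" where
  "block_toeplitz_mult n s T w l = (\<Sum>j = 1..s + n. T (int n + int l - int j) *v w j)"

text \<open>Stacked vector phi_s(k) = [phi(k+1); ...; phi(k+s)], block l is phi(k+l).\<close>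
definition stack :: "(int \<Rightarrow> 'a) \<Rightarrow> int \<Rightarrow> nat \<Rightarrow> 'a" where
  "stack \<phi> k l = \<phi> (k + int l)"

end

(* Let z be the zero-state response of A + B Fd to the injected residual L r. Then x = xh - z is a
   trajectory of the plant (A, B) with input u - Fd z. Controllability survives state feedback, so
   the state x(k + 1) is reached from zero in n steps of A + B F; continuing with the input
   v = (u - Fd z) - F x turns x into a zero-state response of A + B F over the whole window. The
   blocks of M_s(F), N_s(F), Yhat_s and Xhat_s are the impulse responses of these two convolutions. *)
theory Submission
  imports Defs
begin

definition zero_state_response :: "real^'n^'n \<Rightarrow> (nat \<Rightarrow> real^'n) \<Rightarrow> nat \<Rightarrow> real^'n" where
  "zero_state_response M g i = (\<Sum>q<i. matpow M (i - 1 - q) *v g q)"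

lemma matrix_vector_mult_sum: "(M::real^'a^'b) *v (\<Sum>q\<in>S. g q) = (\<Sum>q\<in>S. M *v g q)"
  using linear_sum[OF matrix_vector_mul_linear, of M g S] by simp

lemma zero_state_response_0 [simp]: "zero_state_response M g 0 = 0"
  by (simp add: zero_state_response_def)

lemma zero_state_response_Suc [simp]:
  "zero_state_response M g (Suc i) = M *v zero_state_response M g i + g i"
proof -
  have "M *v zero_state_response M g i = (\<Sum>q<i. matpow M (Suc i - 1 - q) *v g q)"
    unfolding zero_state_response_def matrix_vector_mult_sum
  proof (rule sum.cong)
    fix q assume "q \<in> {..<i}"
    then have "Suc i - 1 - q = Suc (i - 1 - q)" by auto
    then show "M *v (matpow M (i - 1 - q) *v g q) = matpow M (Suc i - 1 - q) *v g q"
      by (simp add: matrix_vector_mul_assoc)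
  qed simp
  then show ?thesis by (simp add: zero_state_response_def)
qed

lemma zero_state_response_cong:
  "(\<And>q. q < i \<Longrightarrow> g q = h q) \<Longrightarrow> zero_state_response M g i = zero_state_response M h i"
  by (simp add: zero_state_response_def)

lemma zero_state_response_feedback:
  assumes step: "\<And>i. N \<le> i \<Longrightarrow> i < K \<Longrightarrow> x (Suc i) = A *v x i + B *v (F *v x i + g i)"
    and init: "x N = zero_state_response (A + B ** F) (\<lambda>i. B *v g i) N"
    and "N \<le> i" "i \<le> K"
  shows "x i = zero_state_response (A + B ** F) (\<lambda>i. B *v g i) i"
  using \<open>N \<le> i\<close> \<open>i \<le> K\<close>
proof (induction i rule: dec_induct)
  case (step i)
  then show ?case
    using assms(1)[of i]
    by (simp add: matrix_vector_mult_add_rdistrib matrix_vector_right_distrib matrix_vector_mul_assoc)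
qed (use init in simp)

definition krylov_space :: "real^'n^'n \<Rightarrow> real^'p^'n \<Rightarrow> nat \<Rightarrow> (real^'n) set" where
  "krylov_space M B k = span (\<Union>j<k. range (\<lambda>w. matpow M j *v (B *v w)))"

lemma controllable_iff_krylov_space:
  "controllable A B \<longleftrightarrow> krylov_space A B CARD('n) = UNIV"
  for A :: "real^'n^'n"
  by (simp add: controllable_def krylov_space_def)

lemma matpow_mult_in_krylov_space: "j < k \<Longrightarrow> matpow M j *v (B *v w) \<in> krylov_space M B k"
  unfolding krylov_space_def by (rule span_base) blast

lemma krylov_space_feedback_shift:
  assumes "x \<in> krylov_space M B k"
  shows "(M - B ** G) *v x \<in> krylov_space M B (Suc k)"
proof -
  have generators: "(M - B ** G) *v (matpow M j *v (B *v w)) \<in> krylov_space M B (Suc k)"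
    if "j < k" for j w
  proof -
    have "(M - B ** G) *v (matpow M j *v (B *v w))
        = matpow M (Suc j) *v (B *v w) - matpow M 0 *v (B *v (G *v (matpow M j *v (B *v w))))"
      by (simp add: matrix_vector_mult_diff_rdistrib matrix_vector_mul_assoc[symmetric])
    moreover have "matpow M (Suc j) *v (B *v w) \<in> krylov_space M B (Suc k)"
      using that by (intro matpow_mult_in_krylov_space) simp
    moreover have "matpow M 0 *v (B *v (G *v (matpow M j *v (B *v w)))) \<in> krylov_space M B (Suc k)"
      by (intro matpow_mult_in_krylov_space) simp
    ultimately show ?thesis
      unfolding krylov_space_def by (simp add: span_diff)
  qed
  have "(M - B ** G) *v x \<in> (\<lambda>x. (M - B ** G) *v x) ` krylov_space M B k"
    using assms by blast
  also have "\<dots> = span ((\<lambda>x. (M - B ** G) *v x) ` (\<Union>j<k. range (\<lambda>w. matpow M j *v (B *v w))))"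
    unfolding krylov_space_def by (rule span_linear_image[OF matrix_vector_mul_linear, symmetric])
  also have "\<dots> \<subseteq> krylov_space M B (Suc k)"
    using generators by (intro span_minimal) (auto simp: krylov_space_def)
  finally show ?thesis .
qed

lemma krylov_space_feedback: "krylov_space A B k \<subseteq> krylov_space (A + B ** F) B k"
proof (induction k)
  case 0
  show ?case by (simp add: krylov_space_def)
next
  case (Suc k)
  have "matpow A j *v (B *v w) \<in> krylov_space (A + B ** F) B (Suc k)" if "j < Suc k" for j w
  proof (cases j)
    case 0
    then show ?thesis using matpow_mult_in_krylov_space[of 0 "Suc k" "A + B ** F" B w] by simp
  next
    case (Suc i)
    with that have "matpow A i *v (B *v w) \<in> krylov_space (A + B ** F) B k"
      using Suc.IH matpow_mult_in_krylov_space[of i k A B w] by auto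
    from krylov_space_feedback_shift[OF this, of F]
    show ?thesis
      by (simp add: Suc matrix_vector_mul_assoc[symmetric])
  qed
  then have "(\<Union>j<Suc k. range (\<lambda>w. matpow A j *v (B *v w)))
      \<subseteq> krylov_space (A + B ** F) B (Suc k)"
    by blast
  then show ?case
    unfolding krylov_space_def[of A] by (rule span_minimal) (simp add: krylov_space_def)
qed

corollary controllable_feedback: "controllable A B \<Longrightarrow> controllable (A + B ** F) B"
  using krylov_space_feedback[of A B "CARD('n)" F]
  by (auto simp: controllable_iff_krylov_space)

lemma controllable_reachable:
  fixes M :: "real^'n^'n" and B :: "real^'p^'n"
  assumes "controllable M B"
  shows "\<exists>w. x = zero_state_response M (\<lambda>q. B *v w q) CARD('n)"
proof -
  let ?N = "CARD('n)"
  let ?R = "range (\<lambda>w. zero_state_response M (\<lambda>q. B *v w q) ?N)"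
  have "subspace ?R"
    unfolding subspace_def
  proof (intro conjI ballI allI)
    show "0 \<in> ?R"
      by (rule range_eqI[of _ _ "\<lambda>q. 0"]) (simp add: zero_state_response_def)
  next
    fix x y assume "x \<in> ?R" "y \<in> ?R"
    then obtain w1 w2 where "x = zero_state_response M (\<lambda>q. B *v w1 q) ?N"
      and "y = zero_state_response M (\<lambda>q. B *v w2 q) ?N" by blast
    then show "x + y \<in> ?R"
      by (intro range_eqI[of _ _ "\<lambda>q. w1 q + w2 q"])
        (simp add: zero_state_response_def matrix_vector_right_distrib sum.distrib)
  next
    fix c :: real and x assume "x \<in> ?R"
    then obtain w where "x = zero_state_response M (\<lambda>q. B *v w q) ?N" by blast
    then show "c *\<^sub>R x \<in> ?R"
      by (intro range_eqI[of _ _ "\<lambda>q. c *\<^sub>R w q"])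
        (simp add: zero_state_response_def matrix_vector_mult_scaleR scaleR_sum_right)
  qed
  moreover have "matpow M j *v (B *v w) \<in> ?R" if "j < ?N" for j w
  proof (rule range_eqI[of _ _ "\<lambda>q. if q = ?N - 1 - j then w else 0"])
    show "matpow M j *v (B *v w)
        = zero_state_response M (\<lambda>q. B *v (if q = ?N - 1 - j then w else 0)) ?N"
      using that by (simp add: zero_state_response_def if_distrib sum.delta cong: if_cong)
  qed
  ultimately have "krylov_space M B ?N \<subseteq> ?R"
    unfolding krylov_space_def by (intro span_minimal) auto
  then show ?thesis
    using assms by (auto simp: controllable_iff_krylov_space)
qed

lemma block_toeplitz_mult_markov:
  fixes T :: "int \<Rightarrow> real^'a^'b"
  assumes causal: "\<And>k. k < 0 \<Longrightarrow> T k = 0"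
    and markov: "\<And>j. T (int (Suc j)) = P ** matpow M j ** Q"
    and Nl: "N + l = Suc i" and "l \<le> s"
  shows "block_toeplitz_mult N s T w l
    = P *v zero_state_response M (\<lambda>q. Q *v w (Suc q)) i + T 0 *v w (Suc i)"
proof -
  have "block_toeplitz_mult N s T w l = (\<Sum>j = 1..N + l. T (int N + int l - int j) *v w j)"
    unfolding block_toeplitz_mult_def
    by (rule sum.mono_neutral_right) (use \<open>l \<le> s\<close> causal in auto)
  also have "\<dots> = (\<Sum>q<Suc i. T (int i - int q) *v w (Suc q))"
    by (simp add: Nl sum.atLeast1_atMost_eq flip: of_nat_add)
  also have "\<dots> = (\<Sum>q<i. P ** (matpow M (i - 1 - q) ** Q) *v w (Suc q)) + T 0 *v w (Suc i)"
  proof -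
    have "T (int i - int q) = P ** (matpow M (i - 1 - q) ** Q)" if "q < i" for q
      using markov[of "i - 1 - q"] that by (simp add: of_nat_diff matrix_mul_assoc)
    then show ?thesis by simp
  qed
  also have "\<dots> = P *v zero_state_response M (\<lambda>q. Q *v w (Suc q)) i + T 0 *v w (Suc i)"
    by (simp add: zero_state_response_def matrix_vector_mult_sum matrix_vector_mul_assoc)
  finally show ?thesis .
qed

lemma block_toeplitz_mult_Mblk:
  "N + l = Suc i \<Longrightarrow> l \<le> s \<Longrightarrow> block_toeplitz_mult N s (Mblk A B F) v l
    = F *v zero_state_response (A + B ** F) (\<lambda>q. B *v v (Suc q)) i + v (Suc i)"
  by (rule trans[OF block_toeplitz_mult_markov]) (simp_all add: Mblk_def)

lemma block_toeplitz_mult_Nblk: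
  "N + l = Suc i \<Longrightarrow> l \<le> s \<Longrightarrow> block_toeplitz_mult N s (Nblk A B C D F) v l
    = (C + D ** F) *v zero_state_response (A + B ** F) (\<lambda>q. B *v v (Suc q)) i
      + D *v v (Suc i)"
  by (rule trans[OF block_toeplitz_mult_markov]) (simp_all add: Nblk_def)

lemma block_toeplitz_mult_Yhat_blk:
  "N + l = Suc i \<Longrightarrow> l \<le> s \<Longrightarrow> block_toeplitz_mult N s (Yhat_blk A B F L) w l
    = F *v zero_state_response (A + B ** F) (\<lambda>q. L *v w (Suc q)) i"
  by (rule trans[OF block_toeplitz_mult_markov]) (simp_all add: Yhat_blk_def)

lemma block_toeplitz_mult_Xhat_blk:
  "N + l = Suc i \<Longrightarrow> l \<le> s \<Longrightarrow> block_toeplitz_mult N s (Xhat_blk A B C D F L) w l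
    = (C + D ** F) *v zero_state_response (A + B ** F) (\<lambda>q. L *v w (Suc q)) i
      + w (Suc i)"
  by (rule trans[OF block_toeplitz_mult_markov]) (simp_all add: Xhat_blk_def)

lemma kernel_model_zero_state_decomposition:
  fixes A :: "real^'n^'n" and B :: "real^'p^'n" and C :: "real^'n^'m" and D :: "real^'p^'m"
    and L :: "real^'m^'n" and F Fd :: "real^'n^'p"
  assumes "controllable A B"
    and model: "kernel_model_on A B C D L u y r xh t0 (t0 + int K - 1)"
  obtains g where
    "\<And>i. CARD('n) \<le> i \<Longrightarrow> i < K \<Longrightarrow> u (t0 + int i)
        = F *v zero_state_response (A + B ** F) (\<lambda>q. B *v g q) i + g i
          + Fd *v zero_state_response (A + B ** Fd) (\<lambda>q. L *v r (t0 + int q)) i"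
    "\<And>i. CARD('n) \<le> i \<Longrightarrow> i < K \<Longrightarrow> y (t0 + int i)
        = (C + D ** F) *v zero_state_response (A + B ** F) (\<lambda>q. B *v g q) i + D *v g i
          + (C + D ** Fd) *v zero_state_response (A + B ** Fd) (\<lambda>q. L *v r (t0 + int q)) i
          + r (t0 + int i)"
proof -
  define N where "N = CARD('n)"
  define z where "z = zero_state_response (A + B ** Fd) (\<lambda>q. L *v r (t0 + int q))"
  define x where "x i = xh (t0 + int i) - z i" for i
  define v where "v i = u (t0 + int i) - Fd *v z i" for i
  have x_step: "x (Suc i) = A *v x i + B *v v i"
    and y_eq: "y (t0 + int i) = C *v (x i + z i) + D *v (v i + Fd *v z i) + r (t0 + int i)"
    if "i < K" for i
    using model that unfolding kernel_model_on_def
    by (auto simp: x_def v_def z_def algebra_simps matrix_vector_mul_assoc[symmetric]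
        dest!: spec[of _ "t0 + int i"])
  obtain w where w: "x N = zero_state_response (A + B ** F) (\<lambda>q. B *v w q) N"
    using controllable_reachable[OF controllable_feedback[OF \<open>controllable A B\<close>]]
    unfolding N_def by blast
  define g where "g i = (if i < N then w i else v i - F *v x i)" for i
  have x_eq: "x i = zero_state_response (A + B ** F) (\<lambda>q. B *v g q) i" if "N \<le> i" "i \<le> K" for i
  proof (rule zero_state_response_feedback[OF _ _ that])
    show "x (Suc i) = A *v x i + B *v (F *v x i + g i)" if "N \<le> i" "i < K" for i
      using x_step[OF \<open>i < K\<close>] that by (simp add: g_def)
    show "x N = zero_state_response (A + B ** F) (\<lambda>q. B *v g q) N"
      using w by (simp add: g_def cong: zero_state_response_cong)
  qed
  have "u (t0 + int i) = F *v x i + g i + Fd *v z i"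
    and "y (t0 + int i) = (C + D ** F) *v x i + D *v g i + (C + D ** Fd) *v z i + r (t0 + int i)"
    if "N \<le> i" "i < K" for i
    using y_eq[OF \<open>i < K\<close>] that
    by (simp_all add: g_def v_def algebra_simps matrix_vector_mul_assoc[symmetric])
  with x_eq show thesis
    unfolding z_def N_def by (intro that) simp_all
qed

lemma kernel_model_image_representation:
  fixes A :: "real^'n^'n" and B :: "real^'p^'n" and C :: "real^'n^'m" and D :: "real^'p^'m"
    and L :: "real^'m^'n" and F Fd :: "real^'n^'p"
  assumes ctrl: "controllable A B"
    and "kernel_model_on A B C D L u y r xh (k - int CARD('n) + 1) (k + int s)"
  shows "\<exists>v. \<forall>l \<in> {1..s}.
           stack u k l = block_toeplitz_mult CARD('n) s (Mblk A B F) v l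
             + block_toeplitz_mult CARD('n) s (Yhat_blk A B Fd L) (stack r (k - int CARD('n))) l
         \<and> stack y k l = block_toeplitz_mult CARD('n) s (Nblk A B C D F) v l
             + block_toeplitz_mult CARD('n) s (Xhat_blk A B C D Fd L) (stack r (k - int CARD('n))) l"
proof -
  define N where "N = CARD('n)"
  define t0 where "t0 = k - int N + 1"
  have model: "kernel_model_on A B C D L u y r xh t0 (t0 + int (N + s) - 1)"
    using assms(2) by (simp add: t0_def N_def)
  obtain g where
    u_eq: "\<And>i. N \<le> i \<Longrightarrow> i < N + s \<Longrightarrow> u (t0 + int i)
        = F *v zero_state_response (A + B ** F) (\<lambda>q. B *v g q) i + g i
          + Fd *v zero_state_response (A + B ** Fd) (\<lambda>q. L *v r (t0 + int q)) i" and
    y_eq: "\<And>i. N \<le> i \<Longrightarrow> i < N + s \<Longrightarrow> y (t0 + int i)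
        = (C + D ** F) *v zero_state_response (A + B ** F) (\<lambda>q. B *v g q) i + D *v g i
          + (C + D ** Fd) *v zero_state_response (A + B ** Fd) (\<lambda>q. L *v r (t0 + int q)) i
          + r (t0 + int i)"
    by (rule kernel_model_zero_state_decomposition[OF ctrl model, where F = F and Fd = Fd])
      (unfold N_def[symmetric], rule that)
  have r_shift: "stack r (k - int N) (Suc q) = r (t0 + int q)" for q
    by (simp add: stack_def t0_def add.assoc)
  have "stack u k l = block_toeplitz_mult N s (Mblk A B F) (\<lambda>j. g (j - 1)) l
          + block_toeplitz_mult N s (Yhat_blk A B Fd L) (stack r (k - int N)) l
      \<and> stack y k l = block_toeplitz_mult N s (Nblk A B C D F) (\<lambda>j. g (j - 1)) l
          + block_toeplitz_mult N s (Xhat_blk A B C D Fd L) (stack r (k - int N)) l"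
    if "l \<in> {1..s}" for l
  proof -
    from that obtain i where i: "N + l = Suc i" "N \<le> i" "i < N + s" "l \<le> s"
      by (intro that[of "N + l - 1"]) auto
    then have "k + int l = t0 + int i"
      by (simp add: t0_def)
    then have "stack u k l = u (t0 + int i)" "stack y k l = y (t0 + int i)"
      by (simp_all add: stack_def)
    with i show ?thesis
      by (simp add: u_eq y_eq block_toeplitz_mult_Mblk block_toeplitz_mult_Nblk
          block_toeplitz_mult_Yhat_blk block_toeplitz_mult_Xhat_blk r_shift)
  qed
  then show ?thesis
    unfolding N_def by blast
qed

theorem lemma4:
  fixes A :: "real^'n^'n" and B :: "real^'p^'n" and C :: "real^'n^'m" and D :: "real^'p^'m"
    and L :: "real^'m^'n" and Fd :: "real^'n^'p"
    and u :: "int \<Rightarrow> real^'p" and y r :: "int \<Rightarrow> real^'m" and xh :: "int \<Rightarrow> real^'n"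
    and s :: nat and k :: int
  assumes "minimal_realization A B C D"
    and "deadbeat A B Fd"
    and "s \<ge> 1"
    and "kernel_model_on A B C D L u y r xh (k - int CARD('n) + 1) (k + int s)"
  shows "\<forall>F :: real^'n^'p. \<exists>v :: nat \<Rightarrow> real^'p. \<forall>l \<in> {1..s}.
           stack u k l = block_toeplitz_mult CARD('n) s (Mblk A B F) v l
                         + block_toeplitz_mult CARD('n) s (Yhat_blk A B Fd L)
                             (stack r (k - int CARD('n))) l
         \<and> stack y k l = block_toeplitz_mult CARD('n) s (Nblk A B C D F) v l
                         + block_toeplitz_mult CARD('n) s (Xhat_blk A B C D Fd L)
                             (stack r (k - int CARD('n))) l"
  using assms(1,4) unfolding minimal_realization_def
  by (blast intro: kernel_model_image_representation)

end
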